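(* Let $\mathcal H$ be a complex Hilbert space and $T\in\mathcal B(\mathcal H)$ a non-invertible operator with $\|Tx\|\ge\|x\|$ for all $x$ and $\sigma_{ap}(T)\subseteq\partial\mathbb D$. Let $T'=T(T^*T)^{-1}$. Then (i) $\sigma(T)=\overline{\mathbb D}=\sigma(T')$, and (ii) $\sigma_{ap}(T)=\partial\mathbb D=\sigma_{ap}(T')$.
   Context: $\sigma_{ap}$ is the approximate point spectrum (set of $\lambda$ with $A-\lambda I$ not bounded below); $\mathbb D$ is the open unit disc. $T^*T\ge I$ is invertible so $T'$ is defined. *)

theory Defs
  imports "HOL-Analysis.Analysis"
begin

text \<open>Complex Hilbert spaces: a complete real normed vector space with a complex
scalar multiplication (extending the real one) and a complex inner product
(conjugate-linear in the first, linear in the second argument) inducing the norm.\<close>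

class chilbert = complete_space + real_normed_vector +
  fixes cscale :: "complex \<Rightarrow> 'a \<Rightarrow> 'a"
    and cinner :: "'a \<Rightarrow> 'a \<Rightarrow> complex"
  assumes cscale_of_real: "cscale (complex_of_real r) x = r *\<^sub>R x"
    and cscale_add_right: "cscale a (x + y) = cscale a x + cscale a y"
    and cscale_add_left: "cscale (a + b) x = cscale a x + cscale b x"
    and cscale_cscale: "cscale a (cscale b x) = cscale (a * b) x"
    and cscale_one: "cscale 1 x = x"
    and cinner_cnj: "cinner x y = cnj (cinner y x)"
    and cinner_add_right: "cinner x (y + z) = cinner x y + cinner x z"
    and cinner_cscale_right: "cinner x (cscale a y) = a * cinner x y"
    and cinner_self_norm: "cinner x x = complex_of_real ((norm x)\<^sup>2)"

definition bounded_clinear :: "('a::chilbert \<Rightarrow> 'a) \<Rightarrow> bool" where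
  "bounded_clinear T \<longleftrightarrow>
     (\<forall>x y. T (x + y) = T x + T y) \<and> (\<forall>a x. T (cscale a x) = cscale a (T x)) \<and>
     (\<exists>K. \<forall>x. norm (T x) \<le> K * norm x)"

definition op_invertible :: "('a::chilbert \<Rightarrow> 'a) \<Rightarrow> bool" where
  "op_invertible T \<longleftrightarrow> (\<exists>S. bounded_clinear S \<and> S \<circ> T = id \<and> T \<circ> S = id)"

definition op_inverse :: "('a::chilbert \<Rightarrow> 'a) \<Rightarrow> ('a \<Rightarrow> 'a)" where
  "op_inverse T = (THE S. bounded_clinear S \<and> S \<circ> T = id \<and> T \<circ> S = id)"

definition adjoint :: "('a::chilbert \<Rightarrow> 'a) \<Rightarrow> ('a \<Rightarrow> 'a)" where
  "adjoint T = (THE S. \<forall>x y. cinner (T x) y = cinner x (S y))"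

definition spectrum :: "('a::chilbert \<Rightarrow> 'a) \<Rightarrow> complex set" where
  "spectrum T = {l. \<not> op_invertible (\<lambda>x. T x - cscale l x)}"

definition ap_spectrum :: "('a::chilbert \<Rightarrow> 'a) \<Rightarrow> complex set" where
  "ap_spectrum T = {l. \<not> (\<exists>c>0. \<forall>x. c * norm x \<le> norm (T x - cscale l x))}"

end

theory Submission
  imports Defs
begin

(* The boundary of the spectrum of a bounded operator S lies in its approximate point
   spectrum. So if sigma_ap(S) is contained in the unit circle, the open unit disc and the
   exterior of the closed disc are connected sets meeting the boundary of sigma(S) nowhere, and
   each lies entirely inside or entirely outside sigma(S). If S is not invertible, 0 and hence
   the whole disc lie in sigma(S); large numbers lie in the resolvent set. Hence sigma(S) is the
   closed disc, and the circle, its boundary, lies in sigma_ap(S).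
   This applies to T directly. For T' = T (T*T)^-1: T*T >= 1 is invertible; T* is a left
   inverse of T'; T' is a contraction, as |T'x|^2 = <(T*T)^-1 x, x> <= |T'x| |x|; T' is not
   invertible, having the same range as T; and for |mu| > 1 the operator T* - mu is bounded
   below, being the adjoint of the invertible T - cnj mu. These facts confine sigma_ap(T') to
   the circle, so the same argument applies to T'. *)

section \<open>Complex inner product spaces\<close>

lemma cscale_zero_left [simp]: "cscale 0 (x::'a::chilbert) = 0"
  using cscale_of_real[of 0 x] by simp

lemma cscale_zero_right [simp]: "cscale a (0::'a::chilbert) = 0"
  using cscale_add_right[of a "0::'a" 0] by simp

lemma cscale_minus_right: "cscale a (- x) = - cscale a (x::'a::chilbert)"
  using cscale_add_right[of a x "-x"] by (simp add: minus_unique)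

lemma cscale_diff_right: "cscale a (x - y) = cscale a x - cscale a (y::'a::chilbert)"
  using cscale_add_right[of a x "-y"] by (simp add: cscale_minus_right)

lemma cscale_minus_left: "cscale (- a) x = - cscale a (x::'a::chilbert)"
  using cscale_add_left[of a "-a" x] by (simp add: minus_unique)

lemma cscale_diff_left: "cscale (a - b) x = cscale a x - cscale b (x::'a::chilbert)"
  using cscale_add_left[of a "-b" x] by (simp add: cscale_minus_left)

lemma cinner_add_left: "cinner (x + y) z = cinner x z + cinner y (z::'a::chilbert)"
  by (metis cinner_cnj cinner_add_right complex_cnj_add)

lemma cinner_cscale_left: "cinner (cscale a x) y = cnj a * cinner x (y::'a::chilbert)"
  by (metis cinner_cnj cinner_cscale_right complex_cnj_mult complex_cnj_cnj)

lemma cinner_zero_right [simp]: "cinner x (0::'a::chilbert) = 0"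
  using cinner_add_right[of x "0::'a" 0] by simp

lemma cinner_zero_left [simp]: "cinner (0::'a::chilbert) x = 0"
  using cinner_add_left[of "0::'a" 0 x] by simp

lemma cinner_minus_right: "cinner x (- y) = - cinner x (y::'a::chilbert)"
  using cinner_add_right[of x y "-y"] by (simp add: minus_unique)

lemma cinner_diff_right: "cinner x (y - z) = cinner x y - cinner x (z::'a::chilbert)"
  using cinner_add_right[of x y "-z"] by (simp add: cinner_minus_right)

lemma cinner_minus_left: "cinner (- x) y = - cinner x (y::'a::chilbert)"
  using cinner_add_left[of x "-x" y] by (simp add: minus_unique)

lemma cinner_diff_left: "cinner (x - y) z = cinner x z - cinner y (z::'a::chilbert)"
  using cinner_add_left[of x "-y" z] by (simp add: cinner_minus_left)

lemma cinner_self_eq_zero: "cinner x x = 0 \<longleftrightarrow> x = (0::'a::chilbert)"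
  by (simp add: cinner_self_norm)

lemma cinner_eqI: "(\<And>x. cinner x a = cinner x b) \<Longrightarrow> a = (b::'a::chilbert)"
  by (metis cinner_diff_right cinner_self_eq_zero diff_eq_eq diff_self)

lemma norm_cscale: "norm (cscale a x) = cmod a * norm (x::'a::chilbert)"
proof -
  have "complex_of_real ((norm (cscale a x))\<^sup>2) = cnj a * a * complex_of_real ((norm x)\<^sup>2)"
    unfolding cinner_self_norm[symmetric] by (simp add: cinner_cscale_left cinner_cscale_right)
  also have "cnj a * a = complex_of_real ((cmod a)\<^sup>2)"
    by (simp add: complex_norm_square mult.commute del: of_real_power)
  finally have "(norm (cscale a x))\<^sup>2 = (cmod a * norm x)\<^sup>2"
    by (metis of_real_eq_iff of_real_mult power_mult_distrib)
  then show ?thesis by (simp add: power2_eq_iff_nonneg)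
qed

lemma power2_norm_add:
  "(norm (a + b))\<^sup>2 = (norm a)\<^sup>2 + (norm b)\<^sup>2 + 2 * Re (cinner a (b::'a::chilbert))"
proof -
  have "complex_of_real ((norm (a + b))\<^sup>2) = cinner a a + cinner b b + (cinner a b + cnj (cinner a b))"
    unfolding cinner_self_norm[symmetric]
    by (simp add: cinner_add_left cinner_add_right cinner_cnj[of b a])
  also have "\<dots> = complex_of_real ((norm a)\<^sup>2 + (norm b)\<^sup>2 + 2 * Re (cinner a b))"
    by (simp add: cinner_self_norm complex_add_cnj del: of_real_power)
  finally show ?thesis using of_real_eq_iff by blast
qed

lemma power2_norm_diff:
  "(norm (a - b))\<^sup>2 = (norm a)\<^sup>2 + (norm b)\<^sup>2 - 2 * Re (cinner a (b::'a::chilbert))"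
  using power2_norm_add[of a "-b"] by (simp add: cinner_minus_right)

lemma parallelogram_law:
  "(norm (a - b))\<^sup>2 = 2 * (norm a)\<^sup>2 + 2 * (norm b)\<^sup>2 - (norm (a + (b::'a::chilbert)))\<^sup>2"
  using power2_norm_add[of a b] power2_norm_diff[of a b] by simp

lemma Cauchy_Schwarz_cinner: "cmod (cinner x y) \<le> norm x * norm (y::'a::chilbert)"
proof (cases "y = 0")
  case True
  then show ?thesis by simp
next
  case False
  define t where "t = cinner y x / complex_of_real ((norm y)\<^sup>2)"
  define z where "z = x - cscale t y"
  have ny: "norm y \<noteq> 0" using False by simp
  have yz: "cinner y z = 0"
    using ny by (simp add: z_def cinner_diff_right cinner_cscale_right t_def cinner_self_norm)
  have "cinner z z = cinner x z"
    by (simp add: z_def cinner_diff_left cinner_cscale_left yz[unfolded z_def])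
  also have "\<dots> = cinner x x - t * cnj (cinner y x)"
    by (simp add: z_def cinner_diff_right cinner_cscale_right cinner_cnj[of x y])
  also have "t * cnj (cinner y x) = complex_of_real ((cmod (cinner y x))\<^sup>2 / (norm y)\<^sup>2)"
    by (simp add: t_def complex_norm_square del: of_real_power)
  finally have "(norm z)\<^sup>2 = (norm x)\<^sup>2 - (cmod (cinner y x))\<^sup>2 / (norm y)\<^sup>2"
    unfolding cinner_self_norm of_real_diff[symmetric] of_real_eq_iff .
  then have "(cmod (cinner y x))\<^sup>2 / (norm y)\<^sup>2 \<le> (norm x)\<^sup>2"
    by (metis diff_ge_0_iff_ge zero_le_power2)
  then have "(cmod (cinner y x))\<^sup>2 \<le> (norm x * norm y)\<^sup>2"
    using ny by (simp add: divide_le_eq power_mult_distrib)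
  then show ?thesis
    by (metis cinner_cnj complex_mod_cnj norm_ge_zero power2_le_imp_le mult_nonneg_nonneg)
qed

lemma Re_cinner_le: "Re (cinner x y) \<le> norm x * norm (y::'a::chilbert)"
  using complex_Re_le_cmod Cauchy_Schwarz_cinner order_trans by blast

lemma cinner_eq_zero_if_norm_le_norm_diff:
  assumes "\<And>t. norm y \<le> norm (y - cscale t z)"
  shows "cinner y (z::'a::chilbert) = 0"
proof -
  have Re_zero: "Re (cinner y w) = 0" if min: "\<And>t::real. norm y \<le> norm (y - cscale t w)" for w
  proof -
    define r where "r = Re (cinner y w)"
    define N where "N = (norm w)\<^sup>2"
    define t where "t = r / (N + 1)"
    have "(norm y)\<^sup>2 \<le> (norm (y - cscale t w))\<^sup>2"
      using min by (simp add: power_mono)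
    also have "\<dots> = (norm y)\<^sup>2 + t\<^sup>2 * N - 2 * t * r"
      unfolding power2_norm_diff
      by (simp add: norm_cscale cinner_cscale_right N_def r_def power_mult_distrib)
    finally have "2 * t * r \<le> t\<^sup>2 * N" by simp
    then have "(2 * t * r) * (N + 1)\<^sup>2 \<le> (t\<^sup>2 * N) * (N + 1)\<^sup>2"
      by (rule mult_right_mono) simp
    moreover have "N \<ge> 0" by (simp add: N_def)
    then have "r = t * (N + 1)" by (simp add: t_def)
    ultimately have "r\<^sup>2 * (N + 2) \<le> 0"
      by (simp add: power2_eq_square algebra_simps)
    then show ?thesis
      using \<open>N \<ge> 0\<close> by (simp add: r_def mult_le_0_iff)
  qed
  have "Re (cinner y z) = 0" using Re_zero assms by blast
  moreover have "Re (cinner y (cscale \<i> z)) = 0"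
    using Re_zero[of "cscale \<i> z"] assms by (simp add: cscale_cscale)
  ultimately show ?thesis by (simp add: cinner_cscale_right complex_eq_iff)
qed

section \<open>Nearest points and the Riesz representation\<close>

lemma norm_diff_le_near_infdist:
  fixes M :: "'a::chilbert set"
  assumes "convex M" "a \<in> M" "b \<in> M"
    and a: "norm (x - a) \<le> infdist x M + \<delta>" and b: "norm (x - b) \<le> infdist x M + \<delta>"
  shows "(norm (a - b))\<^sup>2 \<le> 8 * infdist x M * \<delta> + 4 * \<delta>\<^sup>2"
proof -
  define d where "d = infdist x M"
  have "(1/2) *\<^sub>R a + (1/2) *\<^sub>R b \<in> M"
    using assms(1-3) by (rule convexD) auto
  then have "d \<le> norm (x - ((1/2) *\<^sub>R a + (1/2) *\<^sub>R b))"
    unfolding d_def dist_norm[symmetric] by (rule infdist_le)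
  moreover have "(x - a) + (x - b) = 2 *\<^sub>R (x - ((1/2) *\<^sub>R a + (1/2) *\<^sub>R b))"
    by (simp add: algebra_simps scaleR_2)
  ultimately have "(2 * d)\<^sup>2 \<le> (norm ((x - a) + (x - b)))\<^sup>2"
    by (simp add: d_def infdist_nonneg power_mono)
  moreover have "(norm (x - a))\<^sup>2 \<le> (d + \<delta>)\<^sup>2" "(norm (x - b))\<^sup>2 \<le> (d + \<delta>)\<^sup>2"
    using a b by (simp_all add: d_def power_mono)
  moreover have "a - b = (x - b) - (x - a)" by simp
  then have "(norm (a - b))\<^sup>2
      = 2 * (norm (x - b))\<^sup>2 + 2 * (norm (x - a))\<^sup>2 - (norm ((x - a) + (x - b)))\<^sup>2"
    by (metis parallelogram_law add.commute)
  ultimately show ?thesis by (simp add: d_def power2_eq_square algebra_simps)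
qed

lemma Cauchy_if_minimizing_sequence:
  fixes M :: "'a::chilbert set"
  assumes "convex M" and u: "\<And>n. u n \<in> M" "\<And>n. norm (x - u n) < infdist x M + 1 / real (Suc n)"
  shows "Cauchy u"
proof (rule CauchyI)
  fix e :: real assume e: "e > 0"
  define d where "d = infdist x M"
  have "d \<ge> 0" by (simp add: d_def infdist_nonneg)
  then have "e\<^sup>2 / (8 * d + 4) > 0" using e by simp
  then obtain N where N: "inverse (real (Suc N)) < min 1 (e\<^sup>2 / (8 * d + 4))"
    using reals_Archimedean[of "min 1 (e\<^sup>2 / (8 * d + 4))"] by auto
  define \<delta> where "\<delta> = 1 / real (Suc N)"
  have \<delta>: "\<delta> > 0" "\<delta> \<le> 1" "\<delta> * (8 * d + 4) < e\<^sup>2"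
    using N \<open>d \<ge> 0\<close> by (auto simp: \<delta>_def field_simps)
  have "norm (u m - u n) < e" if "m \<ge> N" "n \<ge> N" for m n
  proof -
    have "norm (x - u k) \<le> d + \<delta>" if "k \<ge> N" for k
    proof -
      have "1 / real (Suc k) \<le> \<delta>" using that by (simp add: \<delta>_def frac_le)
      then show ?thesis using u(2)[of k] by (simp add: d_def)
    qed
    then have "(norm (u m - u n))\<^sup>2 \<le> 8 * d * \<delta> + 4 * \<delta>\<^sup>2"
      unfolding d_def using u(1) that
      by (intro norm_diff_le_near_infdist[OF \<open>convex M\<close>]) (auto simp: d_def)
    also have "\<dots> \<le> \<delta> * (8 * d + 4)"
      using \<delta> \<open>d \<ge> 0\<close> by (simp add: power2_eq_square algebra_simps)
    also have "\<dots> < e\<^sup>2" by (rule \<delta>(3))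
    finally show ?thesis using e by (simp add: power2_less_imp_less)
  qed
  then show "\<exists>M. \<forall>m\<ge>M. \<forall>n\<ge>M. norm (u m - u n) < e" by blast
qed

lemma exists_nearest_point_closed_convex:
  fixes M :: "'a::chilbert set"
  assumes "closed M" "convex M" "M \<noteq> {}"
  shows "\<exists>m\<in>M. \<forall>u\<in>M. norm (x - m) \<le> norm (x - u)"
proof -
  define d where "d = infdist x M"
  have "\<exists>u\<in>M. norm (x - u) < d + 1 / real (Suc n)" for n
  proof -
    have "(INF u\<in>M. dist x u) < d + 1 / real (Suc n)"
      using infdist_notempty[OF \<open>M \<noteq> {}\<close>] by (simp add: d_def)
    then show ?thesis
      using \<open>M \<noteq> {}\<close>
      by (subst (asm) cINF_less_iff) (auto intro: bdd_belowI[of _ 0] simp: dist_norm)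
  qed
  then obtain u where u: "\<And>n. u n \<in> M" "\<And>n. norm (x - u n) < d + 1 / real (Suc n)"
    by metis
  then obtain m where lim: "u \<longlonglongrightarrow> m"
    using Cauchy_if_minimizing_sequence[OF \<open>convex M\<close>] Cauchy_convergent convergent_def
    by (metis d_def)
  have "m \<in> M" using closed_sequentially[OF \<open>closed M\<close> u(1) lim] .
  have "(\<lambda>n. d + 1 / real (Suc n)) \<longlonglongrightarrow> d"
    using tendsto_add[OF tendsto_const LIMSEQ_inverse_real_of_nat, of d]
    by (simp add: inverse_eq_divide)
  moreover have "(\<lambda>n. norm (x - u n)) \<longlonglongrightarrow> norm (x - m)"
    by (intro tendsto_intros lim)
  ultimately have "norm (x - m) \<le> d"
    using u(2) by (intro LIMSEQ_le) (auto intro: less_imp_le)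
  then show ?thesis
    using \<open>m \<in> M\<close> infdist_le[of _ M x] by (force simp: d_def dist_norm)
qed

lemma exists_orthogonal_to_closed_subspace:
  fixes M :: "'a::chilbert set"
  assumes "closed M" and "0 \<in> M" and add: "\<And>u v. u \<in> M \<Longrightarrow> v \<in> M \<Longrightarrow> u + v \<in> M"
    and scale: "\<And>a u. u \<in> M \<Longrightarrow> cscale a u \<in> M" and "x \<notin> M"
  shows "\<exists>y. y \<noteq> 0 \<and> (\<forall>w\<in>M. cinner y w = 0)"
proof -
  have "convex M"
    unfolding convex_def using add scale by (metis cscale_of_real)
  then obtain m where "m \<in> M" and m: "\<And>u. u \<in> M \<Longrightarrow> norm (x - m) \<le> norm (x - u)"
    using exists_nearest_point_closed_convex[OF \<open>closed M\<close>] \<open>0 \<in> M\<close> by blast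
  have "cinner (x - m) w = 0" if "w \<in> M" for w
  proof (rule cinner_eq_zero_if_norm_le_norm_diff)
    fix t
    have "norm (x - m) \<le> norm (x - (m + cscale t w))"
      by (rule m[OF add[OF \<open>m \<in> M\<close> scale[OF that]]])
    then show "norm (x - m) \<le> norm (x - m - cscale t w)"
      by (simp add: algebra_simps)
  qed
  moreover have "x - m \<noteq> 0" using \<open>x \<notin> M\<close> \<open>m \<in> M\<close> by auto
  ultimately show ?thesis by blast
qed

lemma Riesz_representation:
  fixes f :: "'a::chilbert \<Rightarrow> complex"
  assumes add: "\<And>x y. f (x + y) = f x + f y" and scale: "\<And>a x. f (cscale a x) = a * f x"
    and bounded: "\<And>x. cmod (f x) \<le> K * norm x"
  shows "\<exists>z. \<forall>x. f x = cinner z x"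
proof (cases "\<forall>x. f x = 0")
  case True
  then show ?thesis by (intro exI[of _ 0]) simp
next
  case False
  then obtain x0 where x0: "f x0 \<noteq> 0" by blast
  have f_diff: "f (a - b) = f a - f b" for a b using add[of "a - b" b] by simp
  define N where "N = {x. f x = 0}"
  have "closed N" unfolding closed_sequential_limits
  proof (intro allI impI)
    fix s l assume sl: "(\<forall>n. s n \<in> N) \<and> s \<longlonglongrightarrow> l"
    have "cmod (f l) \<le> K * norm (l - s n)" for n
      using bounded[of "l - s n"] sl f_diff[of l "s n"] by (simp add: N_def)
    moreover have "(\<lambda>n. K * norm (l - s n)) \<longlonglongrightarrow> K * norm (l - l)"
      using sl by (intro tendsto_intros) auto
    ultimately have "cmod (f l) \<le> 0"
      by (intro LIMSEQ_le[OF tendsto_const]) auto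
    then show "l \<in> N" by (simp add: N_def)
  qed
  moreover have "0 \<in> N" using add[of 0 0] by (simp add: N_def)
  ultimately obtain y where "y \<noteq> 0" and y: "\<forall>w\<in>N. cinner y w = 0"
    using exists_orthogonal_to_closed_subspace[of N x0] x0 by (auto simp: N_def add scale)
  have "cinner y y \<noteq> 0" using \<open>y \<noteq> 0\<close> by (simp add: cinner_self_eq_zero)
  have f_eq: "f v = f y * cinner y v / cinner y y" for v
  proof -
    have "cscale (f v) y - cscale (f y) v \<in> N" by (simp add: N_def f_diff scale)
    then have "cinner y (cscale (f v) y - cscale (f y) v) = 0" using y by blast
    then have "f v * cinner y y - f y * cinner y v = 0"
      by (simp only: cinner_diff_right cinner_cscale_right)
    then have "f v * cinner y y = f y * cinner y v" by (simp only: right_minus_eq)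
    then show ?thesis using \<open>cinner y y \<noteq> 0\<close> by (simp add: eq_divide_eq)
  qed
  have "f v = cinner (cscale (cnj (f y / cinner y y)) y) v" for v
    unfolding cinner_cscale_left complex_cnj_cnj f_eq[of v] by simp
  then show ?thesis by blast
qed

section \<open>Bounded operators and the adjoint\<close>

lemma bounded_clinear_add: "bounded_clinear T \<Longrightarrow> T (x + y) = T x + T y"
  by (simp add: bounded_clinear_def)

lemma bounded_clinear_cscale: "bounded_clinear T \<Longrightarrow> T (cscale a x) = cscale a (T x)"
  by (simp add: bounded_clinear_def)

lemma bounded_clinear_diff: "bounded_clinear T \<Longrightarrow> T (x - y) = T x - T y"
  by (metis bounded_clinear_add diff_add_cancel eq_diff_eq)

lemma bounded_clinear_pos_bound: "bounded_clinear T \<Longrightarrow> \<exists>K>0. \<forall>x. norm (T x) \<le> K * norm x"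
  unfolding bounded_clinear_def
  by (metis dual_order.trans max.cobounded1 mult_right_mono norm_ge_zero
      zero_less_one max.strict_coboundedI2)

lemma bounded_clinearI:
  assumes "\<And>x y. T (x + y) = T x + T y" "\<And>a x. T (cscale a x) = cscale a (T x)"
    and "\<And>x. norm (T x) \<le> K * norm x"
  shows "bounded_clinear T"
  using assms unfolding bounded_clinear_def by blast

lemma bounded_clinear_cscale_op: "bounded_clinear (\<lambda>x::'a::chilbert. cscale a x)"
  by (rule bounded_clinearI[where K="cmod a"])
    (auto simp: cscale_add_right cscale_cscale mult.commute norm_cscale)

lemma bounded_clinear_add_op:
  assumes A: "bounded_clinear A" and E: "bounded_clinear E"
  shows "bounded_clinear (\<lambda>x. A x + E x)"
proof -
  obtain K1 where K1: "\<forall>x. norm (A x) \<le> K1 * norm x"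
    using A by (auto simp: bounded_clinear_def)
  obtain K2 where K2: "\<forall>x. norm (E x) \<le> K2 * norm x"
    using E by (auto simp: bounded_clinear_def)
  show ?thesis
  proof (rule bounded_clinearI[where K="K1 + K2"])
    show "norm (A x + E x) \<le> (K1 + K2) * norm x" for x
      using K1 K2 norm_triangle_ineq[of "A x" "E x"] by (smt (verit) distrib_right)
  qed (use A E in \<open>simp_all add: bounded_clinear_add bounded_clinear_cscale cscale_add_right\<close>)
qed

lemma bounded_clinear_compose:
  assumes A: "bounded_clinear A" and E: "bounded_clinear E"
  shows "bounded_clinear (A \<circ> E)"
proof -
  obtain K1 where K1: "K1 > 0" "\<forall>x. norm (A x) \<le> K1 * norm x"
    using bounded_clinear_pos_bound[OF A] by auto
  obtain K2 where K2: "\<forall>x. norm (E x) \<le> K2 * norm x"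
    using E by (auto simp: bounded_clinear_def)
  show ?thesis
  proof (rule bounded_clinearI[where K="K1 * K2"])
    show "norm ((A \<circ> E) x) \<le> (K1 * K2) * norm x" for x
      using K1(2)[rule_format, of "E x"] K2[rule_format, of x] K1(1)
      by (smt (verit) mult.assoc mult_left_mono o_apply)
  qed (use A E in \<open>simp_all add: bounded_clinear_add bounded_clinear_cscale\<close>)
qed

lemma bounded_clinear_minus_cscale:
  "bounded_clinear S \<Longrightarrow> bounded_clinear (\<lambda>x. S x - cscale l x)"
  using bounded_clinear_add_op[OF _ bounded_clinear_cscale_op, of S "- l"]
  by (simp add: cscale_minus_left)

lemma adjoint_eqI:
  assumes "\<And>x y. cinner (T x) y = cinner x (S y)"
  shows "adjoint T = S"
  unfolding adjoint_def
proof (rule the_equality)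
  fix S' assume "\<forall>x y. cinner (T x) y = cinner x (S' y)"
  then show "S' = S" using assms by (metis cinner_eqI ext)
qed (use assms in blast)

lemma cinner_adjoint:
  assumes T: "bounded_clinear T"
  shows "cinner (T x) y = cinner x (adjoint T y)"
proof -
  obtain K where K: "\<forall>x. norm (T x) \<le> K * norm x"
    using T by (auto simp: bounded_clinear_def)
  have "\<exists>z. \<forall>x. cinner y (T x) = cinner z x" for y
  proof (rule Riesz_representation[where K="norm y * K"])
    show "cmod (cinner y (T x)) \<le> norm y * K * norm x" for x
      using Cauchy_Schwarz_cinner[of y "T x"] K[rule_format, of x]
      by (metis mult.assoc mult_left_mono norm_ge_zero order_trans)
  qed (use T in \<open>simp_all add: bounded_clinear_add bounded_clinear_cscale cinner_add_right
        cinner_cscale_right\<close>)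
  then have "\<exists>z. \<forall>x. cinner (T x) y = cinner x z" for y
    by (metis cinner_cnj)
  then obtain S where "\<And>x y. cinner (T x) y = cinner x (S y)" by metis
  then show ?thesis using adjoint_eqI by metis
qed

lemma bounded_clinear_adjoint:
  assumes T: "bounded_clinear T"
  shows "bounded_clinear (adjoint T)"
proof -
  obtain K where K: "K > 0" "\<forall>x. norm (T x) \<le> K * norm x"
    using bounded_clinear_pos_bound[OF T] by blast
  note adj = cinner_adjoint[OF T]
  show ?thesis
  proof (rule bounded_clinearI[where K=K])
    show "norm (adjoint T y) \<le> K * norm y" for y
    proof -
      have "(norm (adjoint T y))\<^sup>2 = Re (cinner (T (adjoint T y)) y)"
        by (simp add: adj cinner_self_norm)
      also have "\<dots> \<le> norm (T (adjoint T y)) * norm y"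
        by (rule Re_cinner_le)
      also have "\<dots> \<le> K * norm (adjoint T y) * norm y"
        using K(2) by (simp add: mult_right_mono)
      finally show ?thesis
        using K(1) by (cases "adjoint T y = 0") (auto simp: power2_eq_square mult.commute)
    qed
  qed (auto intro: cinner_eqI simp: adj[symmetric] cinner_add_right cinner_cscale_right)
qed

section \<open>Invertibility and spectra\<close>

lemma op_inverse:
  assumes "op_invertible A"
  shows bounded_clinear_op_inverse: "bounded_clinear (op_inverse A)"
    and op_inverse_left: "op_inverse A (A x) = x"
    and op_inverse_right: "A (op_inverse A y) = y"
proof -
  obtain S where S: "bounded_clinear S" "S \<circ> A = id" "A \<circ> S = id"
    using assms unfolding op_invertible_def by blast
  have "op_inverse A = S"
    unfolding op_inverse_def
  proof (rule the_equality)
    fix S' assume "bounded_clinear S' \<and> S' \<circ> A = id \<and> A \<circ> S' = id"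
    then show "S' = S" using S(3) by (metis comp_assoc comp_id id_comp)
  qed (use S in blast)
  then show "bounded_clinear (op_inverse A)" "op_inverse A (A x) = x" "A (op_inverse A y) = y"
    using S by (auto simp: pointfree_idE)
qed

lemma op_invertible_if_bounded_below_surj:
  assumes A: "bounded_clinear A" and "c > 0" and below: "\<And>x. c * norm x \<le> norm (A x)"
    and "surj A"
  shows "op_invertible A"
proof -
  define S where "S = inv A"
  have AS: "A (S y) = y" for y unfolding S_def using \<open>surj A\<close> by (simp add: surj_f_inv_f)
  have "inj A"
  proof (rule injI)
    fix x y assume "A x = A y"
    then have "c * norm (x - y) \<le> 0" using below[of "x - y"] A by (simp add: bounded_clinear_diff)
    then show "x = y" using \<open>c > 0\<close> by (simp add: mult_le_0_iff)
  qed
  then have SA: "S (A x) = x" for x by (simp add: S_def)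
  have "bounded_clinear S"
  proof (rule bounded_clinearI[where K="1/c"])
    show "S (x + y) = S x + S y" for x y
      by (metis AS SA A bounded_clinear_add)
    show "S (cscale a x) = cscale a (S x)" for a x
      by (metis AS SA A bounded_clinear_cscale)
    show "norm (S x) \<le> 1 / c * norm x" for x
      using below[of "S x"] \<open>c > 0\<close> by (simp add: AS field_simps)
  qed
  then show ?thesis unfolding op_invertible_def using AS SA by (intro exI[of _ S]) auto
qed

lemma norm_op_inverse_le:
  assumes "op_invertible A" "c > 0" "\<And>x. c * norm x \<le> norm (A x)"
  shows "norm (op_inverse A y) \<le> (1/c) * norm y"
  using assms(3)[of "op_inverse A y"] assms(2) by (simp add: op_inverse_right[OF assms(1)] field_simps)

text \<open>\<open>A x + E x = y\<close> is the fixed-point equation of \<open>x \<mapsto> A\<^sup>-\<^sup>1 (y - E x)\<close>, a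
  contraction with constant \<open>e M\<close>.\<close>

lemma op_invertible_add_small:
  assumes A: "bounded_clinear A" "op_invertible A"
    and M: "M > 0" "\<And>y. norm (op_inverse A y) \<le> M * norm y"
    and E: "bounded_clinear E" "\<And>x. norm (E x) \<le> e * norm x" and "e \<ge> 0" "e * M < 1"
  shows "op_invertible (\<lambda>x. A x + E x)"
proof -
  define R where "R = op_inverse A"
  have R: "bounded_clinear R" "\<And>y. A (R y) = y" "\<And>x. R (A x) = x"
    using op_inverse[OF A(2)] by (simp_all add: R_def)
  have "\<exists>x. y = A x + E x" for y
  proof -
    define f where "f = (\<lambda>x. R (y - E x))"
    have "dist (f x) (f x') \<le> (M * e) * dist x x'" for x x'
    proof -
      have "norm (f x - f x') = norm (R (E (x' - x)))"
        unfolding f_def by (simp add: bounded_clinear_diff[OF R(1)] bounded_clinear_diff[OF E(1)])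
      also have "\<dots> \<le> M * norm (E (x' - x))"
        using M(2) by (simp add: R_def)
      also have "\<dots> \<le> M * (e * norm (x' - x))"
        using E(2)[of "x' - x"] M(1) by simp
      finally show ?thesis by (simp add: dist_norm norm_minus_commute mult.assoc)
    qed
    then obtain x where "f x = x"
      using banach_fix_type[of "M * e" f] M(1) assms(7,8) by (auto simp: mult.commute)
    then have "A x = y - E x" unfolding f_def using R(2) by metis
    then show ?thesis by (intro exI[of _ x]) simp
  qed
  then have "surj (\<lambda>x. A x + E x)" by (auto simp: surj_def)
  moreover have "((1 - M * e) / M) * norm x \<le> norm (A x + E x)" for x
  proof -
    have "norm x \<le> M * norm (A x)"
      using M(2)[of "A x"] R(3) by (simp add: R_def)
    also have "norm (A x) \<le> norm (A x + E x) + e * norm x"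
      using E(2)[of x] norm_triangle_ineq4[of "A x + E x" "E x"] by simp
    finally have "norm x \<le> M * (norm (A x + E x) + e * norm x)"
      using M(1) by (simp add: mult_left_mono)
    then show ?thesis using M(1) by (simp add: field_simps)
  qed
  moreover have "(1 - M * e) / M > 0" using assms(8) M(1) by (simp add: mult.commute)
  ultimately show ?thesis
    using op_invertible_if_bounded_below_surj[OF bounded_clinear_add_op[OF A(1) E(1)]] by blast
qed

lemma op_invertible_minus_cscale_perturb:
  assumes S: "bounded_clinear S" and inv: "op_invertible (\<lambda>x. S x - cscale \<mu> x)"
    and M: "M > 0" "\<And>y. norm (op_inverse (\<lambda>x. S x - cscale \<mu> x) y) \<le> M * norm y"
    and close: "cmod (\<mu> - l) * M < 1"
  shows "op_invertible (\<lambda>x. S x - cscale l x)"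
proof -
  have "op_invertible (\<lambda>x. (S x - cscale \<mu> x) + cscale (\<mu> - l) x)"
    using bounded_clinear_minus_cscale[OF S] inv M bounded_clinear_cscale_op close
    by (intro op_invertible_add_small) (auto simp: norm_cscale)
  moreover have "(\<lambda>x. (S x - cscale \<mu> x) + cscale (\<mu> - l) x) = (\<lambda>x. S x - cscale l x)"
    by (simp add: cscale_diff_left)
  ultimately show ?thesis by simp
qed

lemma notin_ap_spectrumI:
  "c > 0 \<Longrightarrow> (\<And>x. c * norm x \<le> norm (S x - cscale l x)) \<Longrightarrow> l \<notin> ap_spectrum S"
  by (auto simp: ap_spectrum_def)

lemma closed_spectrum:
  assumes S: "bounded_clinear S"
  shows "closed (spectrum S)"
  unfolding closed_def open_dist
proof (intro ballI)
  fix \<mu> assume "\<mu> \<in> - spectrum S"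
  then have inv: "op_invertible (\<lambda>x. S x - cscale \<mu> x)" by (simp add: spectrum_def)
  then obtain M where M: "M > 0" "\<And>y. norm (op_inverse (\<lambda>x. S x - cscale \<mu> x) y) \<le> M * norm y"
    using bounded_clinear_pos_bound[OF bounded_clinear_op_inverse] by blast
  have "l \<in> - spectrum S" if "dist l \<mu> < 1 / M" for l
    using op_invertible_minus_cscale_perturb[OF S inv M, of l] that M(1)
    by (simp add: spectrum_def dist_norm norm_minus_commute field_simps)
  then show "\<exists>e>0. \<forall>l. dist l \<mu> < e \<longrightarrow> l \<in> - spectrum S"
    using M(1) by (intro exI[of _ "1/M"]) auto
qed

lemma frontier_spectrum_subset_ap_spectrum:
  assumes S: "bounded_clinear S"
  shows "frontier (spectrum S) \<subseteq> ap_spectrum S"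
proof
  fix l assume l: "l \<in> frontier (spectrum S)"
  then have "l \<in> spectrum S"
    using closed_spectrum[OF S] frontier_subset_closed by blast
  show "l \<in> ap_spectrum S"
  proof (rule ccontr)
    assume "l \<notin> ap_spectrum S"
    then obtain c where "c > 0" and c: "\<And>x. c * norm x \<le> norm (S x - cscale l x)"
      by (auto simp: ap_spectrum_def)
    obtain \<mu> where "\<mu> \<notin> spectrum S" and "dist l \<mu> < c/2"
      using l \<open>c > 0\<close> unfolding frontier_straddle by (meson half_gt_zero)
    then have inv: "op_invertible (\<lambda>x. S x - cscale \<mu> x)"
      and close: "cmod (\<mu> - l) < c/2"
      by (simp_all add: spectrum_def dist_norm norm_minus_commute)
    have "(c/2) * norm x \<le> norm (S x - cscale \<mu> x)" for x
    proof -
      have "S x - cscale l x = (S x - cscale \<mu> x) + cscale (\<mu> - l) x"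
        by (simp add: cscale_diff_left)
      then have "c * norm x \<le> norm (S x - cscale \<mu> x) + cmod (\<mu> - l) * norm x"
        using c[of x] norm_triangle_ineq[of "S x - cscale \<mu> x"] by (metis norm_cscale order_trans)
      then show ?thesis using close mult_right_mono[OF less_imp_le[OF close] norm_ge_zero[of x]]
        by linarith
    qed
    then have "op_invertible (\<lambda>x. S x - cscale l x)"
      using \<open>c > 0\<close> close norm_op_inverse_le[OF inv, of "c/2"]
      by (intro op_invertible_minus_cscale_perturb[OF S inv, of "2/c"]) (auto simp: field_simps)
    with \<open>l \<in> spectrum S\<close> show False by (simp add: spectrum_def)
  qed
qed

lemma connected_subset_spectrum_or_disjoint:
  assumes "bounded_clinear S" "connected C" "C \<inter> ap_spectrum S = {}"
  shows "C \<subseteq> spectrum S \<or> C \<inter> spectrum S = {}"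
  using connected_Int_frontier[OF assms(2), of "spectrum S"]
    frontier_spectrum_subset_ap_spectrum[OF assms(1)] assms(3) by blast

lemma bounded_spectrum:
  assumes S: "bounded_clinear S"
  shows "bounded (spectrum S)"
proof -
  obtain K where "K > 0" and K: "\<And>x. norm (S x) \<le> K * norm x"
    using bounded_clinear_pos_bound[OF S] by blast
  have "op_invertible (\<lambda>x. S x - cscale \<mu> x)" if "cmod \<mu> > K" for \<mu>
  proof -
    define A where "A = (\<lambda>x::'a. cscale (- \<mu>) x)"
    have "\<mu> \<noteq> 0" using that \<open>K > 0\<close> by auto
    have A_below: "cmod \<mu> * norm x \<le> norm (A x)" for x by (simp add: A_def norm_cscale)
    have "A (cscale (- 1 / \<mu>) y) = y" for y
      using \<open>\<mu> \<noteq> 0\<close> by (simp add: A_def cscale_cscale cscale_one)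
    then have "surj A" by (metis surjI)
    then have inv: "op_invertible A"
      using op_invertible_if_bounded_below_surj[OF _ _ A_below] bounded_clinear_cscale_op \<open>\<mu> \<noteq> 0\<close>
      by (auto simp: A_def)
    have "norm (op_inverse A y) \<le> (1 / cmod \<mu>) * norm y" for y
      using norm_op_inverse_le[OF inv _ A_below] \<open>\<mu> \<noteq> 0\<close> by simp
    moreover have "K * (1 / cmod \<mu>) < 1"
      using that \<open>K > 0\<close> by (simp add: divide_less_eq)
    ultimately have "op_invertible (\<lambda>x. A x + S x)"
      using bounded_clinear_cscale_op inv S K \<open>K > 0\<close> \<open>\<mu> \<noteq> 0\<close>
      by (intro op_invertible_add_small[where M="1 / cmod \<mu>" and e=K]) (auto simp: A_def)
    moreover have "(\<lambda>x. A x + S x) = (\<lambda>x. S x - cscale \<mu> x)"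
      by (simp add: A_def cscale_minus_left)
    ultimately show ?thesis by simp
  qed
  then have "spectrum S \<subseteq> cball 0 K"
    by (force simp: spectrum_def)
  then show ?thesis using bounded_cball bounded_subset by blast
qed

lemma spectra_eq_disc_if_ap_spectrum_subset_sphere:
  assumes S: "bounded_clinear S" and "\<not> op_invertible S" and ap: "ap_spectrum S \<subseteq> sphere 0 1"
  shows "spectrum S = cball 0 1 \<and> ap_spectrum S = sphere 0 1"
proof -
  have "0 \<in> spectrum S" using assms(2) by (simp add: spectrum_def)
  then have "ball 0 1 \<inter> spectrum S \<noteq> {}"
    by (metis IntI centre_in_ball empty_iff zero_less_one)
  moreover have "ball 0 1 \<inter> ap_spectrum S = {}" using ap by auto
  ultimately have "ball 0 1 \<subseteq> spectrum S"
    using connected_subset_spectrum_or_disjoint[OF S connected_ball, of 0 1] by blast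
  then have "closure (ball 0 1) \<subseteq> spectrum S"
    using closed_spectrum[OF S] by (rule closure_minimal)
  then have "cball 0 1 \<subseteq> spectrum S" by simp
  obtain R where R: "\<And>z. z \<in> spectrum S \<Longrightarrow> cmod z \<le> R"
    using bounded_spectrum[OF S] by (auto simp: bounded_iff)
  have "complex_of_real (max R 1 + 1) \<in> - cball 0 1 - spectrum S"
    using R[of "complex_of_real (max R 1 + 1)"] by auto
  moreover have "connected (- cball (0::complex) 1)"
    by (rule connected_complement_bounded_convex) auto
  moreover have "- cball 0 1 \<inter> ap_spectrum S = {}" using ap by auto
  ultimately have "- cball 0 1 \<inter> spectrum S = {}"
    using connected_subset_spectrum_or_disjoint[OF S] by blast
  with \<open>cball 0 1 \<subseteq> spectrum S\<close> have "spectrum S = cball 0 1" by blast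
  moreover have "sphere 0 1 \<subseteq> ap_spectrum S"
    using frontier_spectrum_subset_ap_spectrum[OF S] \<open>spectrum S = cball 0 1\<close> by simp
  ultimately show ?thesis using ap by blast
qed

section \<open>Coercive operators and left inverses\<close>

text \<open>The half-plane \<open>Re z < c\<close> is connected, avoids the approximate point spectrum and
  reaches beyond the spectrum, so it misses the spectrum entirely.\<close>

lemma op_invertible_if_coercive:
  assumes A: "bounded_clinear A" and "c > 0"
    and coercive: "\<And>x. c * (norm x)\<^sup>2 \<le> Re (cinner x (A x))"
  shows "op_invertible A"
proof -
  have "l \<notin> ap_spectrum A" if "Re l < c" for l
  proof (rule notin_ap_spectrumI)
    show "c - Re l > 0" using that by simp
    show "(c - Re l) * norm x \<le> norm (A x - cscale l x)" for x
    proof -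
      have "Re (cinner x (A x - cscale l x)) = Re (cinner x (A x)) - Re l * (norm x)\<^sup>2"
        by (simp add: cinner_diff_right cinner_cscale_right cinner_self_norm del: of_real_power)
      then have "norm x * ((c - Re l) * norm x) \<le> Re (cinner x (A x - cscale l x))"
        using coercive[of x] by (simp add: power2_eq_square algebra_simps)
      also have "\<dots> \<le> norm x * norm (A x - cscale l x)"
        by (rule Re_cinner_le)
      finally show ?thesis
        by (cases "x = 0") (simp_all add: mult_le_cancel_left_pos)
    qed
  qed
  then have "{z. c > Re z} \<inter> ap_spectrum A = {}" by auto
  then have "{z. c > Re z} \<subseteq> spectrum A \<or> {z. c > Re z} \<inter> spectrum A = {}"
    by (rule connected_subset_spectrum_or_disjoint[OF A connected_halfspace_Re_lt])
  moreover obtain R where R: "\<And>z. z \<in> spectrum A \<Longrightarrow> cmod z \<le> R"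
    using bounded_spectrum[OF A] by (auto simp: bounded_iff)
  define w where "w = - complex_of_real (max R 0 + 1)"
  have "cmod w = max R 0 + 1"
    unfolding w_def norm_minus_cancel norm_of_real by simp
  then have "w \<in> {z. c > Re z} - spectrum A"
    using R[of w] \<open>c > 0\<close> by (auto simp: w_def)
  ultimately have "{z. c > Re z} \<inter> spectrum A = {}" by blast
  moreover have "0 \<in> {z. c > Re z}" using \<open>c > 0\<close> by simp
  ultimately have "0 \<notin> spectrum A" by blast
  then show ?thesis by (simp add: spectrum_def)
qed

lemma bounded_below_if_adjoint_of_op_invertible:
  assumes inv: "op_invertible S" and adj: "\<And>x y. cinner (S x) y = cinner x (S' y)"
  shows "\<exists>c>0. \<forall>y. c * norm y \<le> norm (S' y)"
proof -
  obtain M where "M > 0" and M: "\<And>y. norm (op_inverse S y) \<le> M * norm y"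
    using bounded_clinear_pos_bound[OF bounded_clinear_op_inverse[OF inv]] by blast
  have "(1 / M) * norm y \<le> norm (S' y)" for y
  proof -
    have "(norm y)\<^sup>2 = Re (cinner (S (op_inverse S y)) y)"
      by (simp add: op_inverse_right[OF inv] cinner_self_norm)
    also have "\<dots> \<le> norm (op_inverse S y) * norm (S' y)"
      unfolding adj by (rule Re_cinner_le)
    also have "\<dots> \<le> M * norm y * norm (S' y)"
      using M by (simp add: mult_right_mono)
    finally show ?thesis
      using \<open>M > 0\<close> by (cases "y = 0") (auto simp: power2_eq_square field_simps)
  qed
  then show ?thesis using \<open>M > 0\<close> by (intro exI[of _ "1 / M"]) auto
qed

lemma cnj_notin_ap_spectrum_adjoint:
  assumes T: "bounded_clinear T" and "\<mu> \<notin> spectrum T"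
  shows "cnj \<mu> \<notin> ap_spectrum (adjoint T)"
proof -
  have "cinner (T x - cscale \<mu> x) y = cinner x (adjoint T y - cscale (cnj \<mu>) y)" for x y
    by (simp add: cinner_diff_left cinner_diff_right cinner_cscale_left cinner_cscale_right
        cinner_adjoint[OF T])
  moreover have "op_invertible (\<lambda>x. T x - cscale \<mu> x)"
    using assms(2) by (simp add: spectrum_def)
  ultimately obtain c where "c > 0" "\<And>y. c * norm y \<le> norm (adjoint T y - cscale (cnj \<mu>) y)"
    using bounded_below_if_adjoint_of_op_invertible[of _ "\<lambda>y. adjoint T y - cscale (cnj \<mu>) y"]
    by blast
  then show ?thesis by (rule notin_ap_spectrumI)
qed

text \<open>For \<open>0 < |l| < 1\<close> the identity \<open>R - l = -l (L - 1/l) R\<close> transfers the lower bound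
  of \<open>L - 1/l\<close> to \<open>R - l\<close>; for \<open>|l| > 1\<close> the contraction property suffices.\<close>

lemma ap_spectrum_subset_sphere_if_left_inverse:
  fixes L R :: "'a::chilbert \<Rightarrow> 'a"
  assumes L: "bounded_clinear L" and left_inverse: "\<And>x. L (R x) = x"
    and contraction: "\<And>x. norm (R x) \<le> norm x"
    and L_ap: "\<And>\<mu>. 1 < cmod \<mu> \<Longrightarrow> \<mu> \<notin> ap_spectrum L"
  shows "ap_spectrum R \<subseteq> sphere 0 1"
proof
  fix l assume l: "l \<in> ap_spectrum R"
  obtain K where "K > 0" and K: "\<And>y. norm (L y) \<le> K * norm y"
    using bounded_clinear_pos_bound[OF L] by blast
  have R_below: "(1 / K) * norm x \<le> norm (R x)" for x
    using K[of "R x"] \<open>K > 0\<close> by (simp add: left_inverse field_simps)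
  consider "l = 0" | "1 < cmod l" | "l \<noteq> 0" "cmod l < 1" | "cmod l = 1"
    by fastforce
  then show "l \<in> sphere 0 1"
  proof cases
    case 1
    have "l \<notin> ap_spectrum R"
      using R_below \<open>K > 0\<close> by (intro notin_ap_spectrumI[of "1 / K"]) (simp_all add: 1)
    with l show ?thesis by blast
  next
    case 2
    have "(cmod l - 1) * norm x \<le> norm (R x - cscale l x)" for x
      using contraction[of x] norm_triangle_sub[of "cscale l x" "R x"]
      by (simp add: norm_cscale norm_minus_commute algebra_simps)
    then have "l \<notin> ap_spectrum R"
      using 2 by (intro notin_ap_spectrumI[of "cmod l - 1"]) simp_all
    with l show ?thesis by blast
  next
    case 3
    then have "1 < cmod (1 / l)" by (simp add: norm_divide)
    then obtain c where "c > 0" and c: "\<And>y. c * norm y \<le> norm (L y - cscale (1 / l) y)"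
      using L_ap by (auto simp: ap_spectrum_def)
    have "cmod l * c * (1 / K) * norm x \<le> norm (R x - cscale l x)" for x
    proof -
      have "R x - cscale l x = cscale (- l) (L (R x) - cscale (1 / l) (R x))"
        using 3 by (simp add: left_inverse cscale_diff_right cscale_cscale cscale_minus_left cscale_one)
      then have "norm (R x - cscale l x) = cmod l * norm (L (R x) - cscale (1 / l) (R x))"
        by (simp add: norm_cscale)
      moreover have "c * ((1 / K) * norm x) \<le> norm (L (R x) - cscale (1 / l) (R x))"
        using c[of "R x"] R_below[of x] \<open>c > 0\<close> by (meson mult_left_mono order_trans less_imp_le)
      then have "cmod l * (c * ((1 / K) * norm x)) \<le> cmod l * norm (L (R x) - cscale (1 / l) (R x))"
        by (rule mult_left_mono) simp
      ultimately show ?thesis by (simp only: mult.assoc)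
    qed
    then have "l \<notin> ap_spectrum R"
      using 3 \<open>c > 0\<close> \<open>K > 0\<close> by (intro notin_ap_spectrumI[of "cmod l * c * (1 / K)"]) simp_all
    with l show ?thesis by blast
  qed simp
qed

lemma norm_compose_le_if_gram_inverse:
  fixes T T' G :: "'a::chilbert \<Rightarrow> 'a"
  assumes adj: "\<And>x y. cinner (T x) y = cinner x (T' y)" and inverse: "\<And>x. T' (T (G x)) = x"
    and expansive: "\<And>x. norm x \<le> norm (T x)"
  shows "norm (T (G x)) \<le> norm x"
proof -
  have "complex_of_real ((norm (T (G x)))\<^sup>2) = cinner (G x) x"
    using adj[of "G x" "T (G x)"] by (simp add: inverse cinner_self_norm del: of_real_power)
  then have "(norm (T (G x)))\<^sup>2 = Re (cinner (G x) x)"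
    by (metis Re_complex_of_real)
  also have "\<dots> \<le> norm (G x) * norm x" by (rule Re_cinner_le)
  also have "\<dots> \<le> norm (T (G x)) * norm x" using expansive by (simp add: mult_right_mono)
  finally show ?thesis
    by (cases "T (G x) = 0") (simp_all add: power2_eq_square)
qed

lemma not_op_invertible_compose:
  assumes T: "bounded_clinear T" and "\<And>x. norm x \<le> norm (T x)" and "\<not> op_invertible T"
  shows "\<not> op_invertible (T \<circ> G)"
proof
  assume "op_invertible (T \<circ> G)"
  then have "surj T" using op_inverse_right by (metis comp_apply surjI)
  then show False
    using op_invertible_if_bounded_below_surj[OF T, of 1] assms(2,3) by simp
qed

theorem corollary4p7:
  fixes T :: "'a::chilbert \<Rightarrow> 'a"
  assumes "bounded_clinear T"
    and "\<not> op_invertible T"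
    and "\<forall>x. norm (T x) \<ge> norm x"
    and "ap_spectrum T \<subseteq> sphere 0 1"
  shows "spectrum T = cball 0 1 \<and> spectrum (T \<circ> op_inverse (adjoint T \<circ> T)) = cball 0 1
       \<and> ap_spectrum T = sphere 0 1 \<and> ap_spectrum (T \<circ> op_inverse (adjoint T \<circ> T)) = sphere 0 1"
proof -
  note T = assms(1) and expansive = assms(3)[rule_format]
  have disc_T: "spectrum T = cball 0 1 \<and> ap_spectrum T = sphere 0 1"
    using spectra_eq_disc_if_ap_spectrum_subset_sphere[OF T assms(2,4)] .
  have gram: "bounded_clinear (adjoint T \<circ> T)"
    by (intro bounded_clinear_compose bounded_clinear_adjoint T)
  have "op_invertible (adjoint T \<circ> T)"
    using expansive by (intro op_invertible_if_coercive[OF gram, of 1])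
      (simp_all add: cinner_adjoint[OF T, symmetric] cinner_self_norm power_mono)
  define G where "G = op_inverse (adjoint T \<circ> T)"
  have G: "bounded_clinear G" "\<And>x. adjoint T (T (G x)) = x"
    using \<open>op_invertible (adjoint T \<circ> T)\<close> bounded_clinear_op_inverse op_inverse_right
    by (fastforce simp: G_def)+
  have "ap_spectrum (T \<circ> G) \<subseteq> sphere 0 1"
  proof (rule ap_spectrum_subset_sphere_if_left_inverse[OF bounded_clinear_adjoint[OF T]])
    show "1 < cmod \<mu> \<Longrightarrow> \<mu> \<notin> ap_spectrum (adjoint T)" for \<mu>
      using cnj_notin_ap_spectrum_adjoint[OF T, of "cnj \<mu>"] disc_T by simp
  qed (use G norm_compose_le_if_gram_inverse[OF cinner_adjoint[OF T]] expansive in auto)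
  then have "spectrum (T \<circ> G) = cball 0 1 \<and> ap_spectrum (T \<circ> G) = sphere 0 1"
    using spectra_eq_disc_if_ap_spectrum_subset_sphere bounded_clinear_compose[OF T G(1)]
      not_op_invertible_compose[OF T expansive assms(2)] by blast
  then show ?thesis using disc_T by (simp add: G_def)
qed

end
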